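(* Let the lattice be one of the standard lattices D2Q9, D3Q19 or D3Q27 (velocities $\boldsymbol{e}_i$, weights $w_i$, $c_s^2=c^2/3$, as described in the context), and let the symmetric subspace admit the orthogonal decomposition $\mathcal{S}=\mathcal{S}^{(0)}\oplus\mathcal{S}^{(2)}\oplus\mathcal{S}^{(G)}$, where $\mathcal{S}^{(G)}$ is spanned by the vectors $(w_i\phi^{(G)}_{i,k})_i$, $k=1,\dots,N_G$, for mutually orthogonal ghost functions $\phi^{(G)}_{\cdot,k}$ (i.e. $\sum_i w_i\phi^{(G)}_{i,k}\phi^{(G)}_{i,l}=0$ for $k\neq l$). Let $f^{\mathrm{neq}}\in\mathbb{R}^Q$ satisfy mass conservation $\sum_i f_i^{\mathrm{neq}}=0$. Then for every $i$, $$ w_i\frac{\mathcal{H}^{(2)}_{i,\alpha\beta}}{2c_s^4}\mathcal{A}^{\mathrm{neq}}_{\alpha\beta} \;=\; f_i^{\mathrm{neq},+}-(\hat P^{(G)}f^{\mathrm{neq}})_i, $$ where $\mathcal{A}^{\mathrm{neq}}_{\alpha\beta}=\sum_j \mathcal{H}^{(2)}_{j,\alpha\beta}f_j^{\mathrm{neq}}$ (summation over repeated Greek indices), $f_i^{\mathrm{neq},+}=\tfrac12(f_i^{\mathrm{neq}}+f_{\bar i}^{\mathrm{neq}})$, and $$(\hat P^{(G)}f^{\mathrm{neq}})_i=\sum_{k=1}^{N_G}\frac{w_i\,\phi^{(G)}_{i,k}}{N^{(\phi)}_{G,k}}\sum_j\phi^{(G)}_{j,k}f_j^{\mathrm{neq}},\qquad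 N^{(\phi)}_{G,k}=\sum_j w_j\big(\phi^{(G)}_{j,k}\big)^2.$$
   Context: Lattices (lattice speed $c>0$, $c_s^2=c^2/3$): D2Q9 has velocities $0$, $(\pm c,0)$, $(0,\pm c)$ with weights $4/9,1/9$ and $(\pm c,\pm c)$ with weight $1/36$; D3Q19 has the rest velocity (weight $1/3$), the 6 axial velocities $\pm c\,\boldsymbol{\hat e}_\alpha$ (weight $1/18$) and the 12 face-diagonal velocities with two components $\pm c$ and one $0$ (weight $1/36$); D3Q27 has the rest velocity (weight $8/27$), axial (weight $2/27$), face-diagonal (weight $1/54$) and the 8 body-diagonal velocities $(\pm c,\pm c,\pm c)$ (weight $1/216$). $Q$ is the number of velocities, $D$ the dimension. For each $i$, $\bar i$ denotes the index with $\boldsymbol{e}_{\bar i}=-\boldsymbol{e}_i$ (so $w_{\bar i}=w_i$). Hermite tensors: $\mathcal{H}^{(2)}_{i,\alpha\beta}=e_{i\alpha}e_{i\beta}-c_s^2\delta_{\alpha\beta}$. The space $\mathbb{R}^Q$ carries the inner product $\langle f,g\rangle=\sum_i f_ig_i/w_i$. The symmetric subspace is $\mathcal{S}=\{f: f_i=f_{\bar i}\ \forall i\}$. $\mathcal{S}^{(0)}=\mathrm{span}\{(w_i)_i\}$, $\mathcal{S}^{(2)}=\mathrm{span}\{(w_i\mathcal{H}^{(2)}_{i,\alpha\beta})_i:\alpha,\beta\}$, and $\mathcal{S}^{(G)}$ is the "ghost" subspace spanned by $(w_i\phi^{(G)}_{i,k})_i$ with $\phi^{(G)}_{\cdot,k}$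 even under inversion. The decomposition hypothesis means these three subspaces are mutually orthogonal for $\langle\cdot,\cdot\rangle$ and their direct sum is $\mathcal{S}$. (For D2Q9, $N_G=1$ and $\phi^{(G)}_i=(e_{ix}^2-c_s^2)(e_{iy}^2-c_s^2)$.) *)

theory Defs
  imports Main "HOL.Real"
begin

datatype lattice = D2Q9 | D3Q19 | D3Q27

fun ldim :: "lattice \<Rightarrow> nat" where
  "ldim D2Q9 = 2" | "ldim D3Q19 = 3" | "ldim D3Q27 = 3"

definition nnz :: "int list \<Rightarrow> nat" where
  "nnz v = length (filter (\<lambda>x. x \<noteq> 0) v)"

fun lvels :: "lattice \<Rightarrow> int list list" where
  "lvels D2Q9 = [[a, b]. a \<leftarrow> [-1, 0, 1], b \<leftarrow> [-1, 0, 1]]"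
| "lvels D3Q19 = filter (\<lambda>v. nnz v \<le> 2)
      [[a, b, d]. a \<leftarrow> [-1, 0, 1], b \<leftarrow> [-1, 0, 1], d \<leftarrow> [-1, 0, 1]]"
| "lvels D3Q27 = [[a, b, d]. a \<leftarrow> [-1, 0, 1], b \<leftarrow> [-1, 0, 1], d \<leftarrow> [-1, 0, 1]]"

fun wclass :: "lattice \<Rightarrow> nat \<Rightarrow> real" where
  "wclass D2Q9 n = (if n = 0 then 4/9 else if n = 1 then 1/9 else 1/36)"
| "wclass D3Q19 n = (if n = 0 then 1/3 else if n = 1 then 1/18 else 1/36)"
| "wclass D3Q27 n = (if n = 0 then 8/27 else if n = 1 then 2/27 else if n = 2 then 1/54 else 1/216)"

definition lQ :: "lattice \<Rightarrow> nat" where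
  "lQ L = length (lvels L)"

definition vel :: "lattice \<Rightarrow> real \<Rightarrow> nat \<Rightarrow> nat \<Rightarrow> real" where
  "vel L c i \<alpha> = c * of_int (lvels L ! i ! \<alpha>)"

definition wt :: "lattice \<Rightarrow> nat \<Rightarrow> real" where
  "wt L i = wclass L (nnz (lvels L ! i))"

definition opp :: "lattice \<Rightarrow> nat \<Rightarrow> nat" where
  "opp L i = (THE j. j < lQ L \<and> lvels L ! j = map uminus (lvels L ! i))"

definition cs2 :: "real \<Rightarrow> real" where
  "cs2 c = c^2 / 3"

definition H2 :: "lattice \<Rightarrow> real \<Rightarrow> nat \<Rightarrow> nat \<Rightarrow> nat \<Rightarrow> real" where
  "H2 L c i \<alpha> \<beta> = vel L c i \<alpha> * vel L c i \<beta> - cs2 c * (if \<alpha> = \<beta> then 1 else 0)"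

text \<open>Vectors in \<open>\<real>^Q\<close> are represented as \<open>nat \<Rightarrow> real\<close>; only entries \<open>i < Q\<close> matter.\<close>
definition winner :: "lattice \<Rightarrow> (nat \<Rightarrow> real) \<Rightarrow> (nat \<Rightarrow> real) \<Rightarrow> real" where
  "winner L f g = (\<Sum>i<lQ L. f i * g i / wt L i)"

definition symS :: "lattice \<Rightarrow> (nat \<Rightarrow> real) set" where
  "symS L = {f. \<forall>i<lQ L. f i = f (opp L i)}"

definition S0 :: "lattice \<Rightarrow> (nat \<Rightarrow> real) set" where
  "S0 L = {f. \<exists>a::real. \<forall>i<lQ L. f i = a * wt L i}"

definition S2 :: "lattice \<Rightarrow> real \<Rightarrow> (nat \<Rightarrow> real) set" where
  "S2 L c = {f. \<exists>A :: nat \<Rightarrow> nat \<Rightarrow> real. \<forall>i<lQ L.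
      f i = (\<Sum>\<alpha><ldim L. \<Sum>\<beta><ldim L. A \<alpha> \<beta> * (wt L i * H2 L c i \<alpha> \<beta>))}"

text \<open>Ghost subspace spanned by \<open>(w_i \<phi>_{i,k})_i\<close>, \<open>k < N_G\<close> (0-based index k).\<close>
definition SG :: "lattice \<Rightarrow> nat \<Rightarrow> (nat \<Rightarrow> nat \<Rightarrow> real) \<Rightarrow> (nat \<Rightarrow> real) set" where
  "SG L NG \<phi> = {f. \<exists>b :: nat \<Rightarrow> real. \<forall>i<lQ L.
      f i = (\<Sum>k<NG. b k * (wt L i * \<phi> k i))}"

definition orth_sets :: "lattice \<Rightarrow> (nat \<Rightarrow> real) set \<Rightarrow> (nat \<Rightarrow> real) set \<Rightarrow> bool" where
  "orth_sets L A B = (\<forall>f\<in>A. \<forall>g\<in>B. winner L f g = 0)"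

text \<open>Decomposition hypothesis: \<open>S^{(0)}, S^{(2)}, S^{(G)}\<close> mutually orthogonal and
  their sum equals the symmetric subspace \<open>S\<close> (directness follows from orthogonality).\<close>
definition decomposition_hyp :: "lattice \<Rightarrow> real \<Rightarrow> nat \<Rightarrow> (nat \<Rightarrow> nat \<Rightarrow> real) \<Rightarrow> bool" where
  "decomposition_hyp L c NG \<phi> \<longleftrightarrow>
     orth_sets L (S0 L) (S2 L c) \<and> orth_sets L (S0 L) (SG L NG \<phi>) \<and>
     orth_sets L (S2 L c) (SG L NG \<phi>) \<and>
     (\<forall>f. f \<in> symS L \<longleftrightarrow>
        (\<exists>g0\<in>S0 L. \<exists>g2\<in>S2 L c. \<exists>gG\<in>SG L NG \<phi>. \<forall>i<lQ L. f i = g0 i + g2 i + gG i))"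

definition Aneq :: "lattice \<Rightarrow> real \<Rightarrow> (nat \<Rightarrow> real) \<Rightarrow> nat \<Rightarrow> nat \<Rightarrow> real" where
  "Aneq L c f \<alpha> \<beta> = (\<Sum>j<lQ L. H2 L c j \<alpha> \<beta> * f j)"

definition fplus :: "lattice \<Rightarrow> (nat \<Rightarrow> real) \<Rightarrow> nat \<Rightarrow> real" where
  "fplus L f i = (f i + f (opp L i)) / 2"

definition NGnorm :: "lattice \<Rightarrow> (nat \<Rightarrow> nat \<Rightarrow> real) \<Rightarrow> nat \<Rightarrow> real" where
  "NGnorm L \<phi> k = (\<Sum>j<lQ L. wt L j * (\<phi> k j)^2)"

definition PG :: "lattice \<Rightarrow> nat \<Rightarrow> (nat \<Rightarrow> nat \<Rightarrow> real) \<Rightarrow> (nat \<Rightarrow> real) \<Rightarrow> nat \<Rightarrow> real" where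
  "PG L NG \<phi> f i = (\<Sum>k<NG. (wt L i * \<phi> k i / NGnorm L \<phi> k) * (\<Sum>j<lQ L. \<phi> k j * f j))"

end

theory Submission
  imports Defs
begin

text \<open>The symmetric part f+ of f lies in S, so it splits as g0 + g2 + gG with components in
  S(0), S(2) and S(G). Testing f+ against w, w phi_k and w H_gd isolates one component at a time
  by orthogonality, and since these test functions are even, the test of f+ against w h equals
  the sum of h_i f_i. Mass conservation kills g0 and orthogonality of the ghosts gives gG = P(G) f.
  Finally, the isotropy of the fourth Hermite moment on the three lattices,
  sum_i w_i H_iab H_igd = cs^4 (d_ag d_bd + d_ad d_bg), identifies the symmetrised coefficients
  of g2 with A_neq / (2 cs^4).\<close>

lemma lvels_rev: "rev (lvels L) = map (map uminus) (lvels L)"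
  by (cases L) (simp_all add: nnz_def)

lemma distinct_lvels: "distinct (lvels L)"
  by (cases L) (simp_all add: nnz_def)

lemma length_lvels: "v \<in> set (lvels L) \<Longrightarrow> length v = ldim L"
  by (cases L) (auto simp: nnz_def)

lemma length_lvels_nth: "i < lQ L \<Longrightarrow> length (lvels L ! i) = ldim L"
  by (simp add: lQ_def length_lvels)

lemma sum_lvels_nth: "(\<Sum>i<lQ L. g (lvels L ! i)) = (\<Sum>v\<leftarrow>lvels L. g v)"
  by (simp add: lQ_def sum_list_sum_nth atLeast0LessThan)

lemma wt_pos: "0 < wt L i"
  unfolding wt_def by (cases L) auto

lemma sum_wt: "(\<Sum>i<lQ L. wt L i) = 1"
  using sum_lvels_nth[where L = L and g = "\<lambda>v. wclass L (nnz v)"] unfolding wt_def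
  by (cases L) (simp_all add: nnz_def)

lemma lattice_fourth_moment:
  "\<forall>a\<in>{..<ldim L}. \<forall>b\<in>{..<ldim L}. \<forall>g\<in>{..<ldim L}. \<forall>d\<in>{..<ldim L}.
     (\<Sum>v\<leftarrow>lvels L. wclass L (nnz v) * (of_int (v!a * v!b) - of_bool (a = b) / 3)
                                   * (of_int (v!g * v!d) - of_bool (g = d) / 3))
     = (of_bool (a = g \<and> b = d) + of_bool (a = d \<and> b = g)) / 9"
  by (cases L) (simp_all add: nnz_def lessThan_nat_numeral)

lemma lvels_mirror:
  assumes "i < lQ L"
  shows "lvels L ! (lQ L - Suc i) = map uminus (lvels L ! i)"
  using arg_cong[OF lvels_rev[of L], of "\<lambda>xs. xs ! i"] assms by (simp add: lQ_def rev_nth)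

lemma opp_eq:
  assumes "i < lQ L"
  shows "opp L i = lQ L - Suc i"
  unfolding opp_def
proof (rule the_equality)
  show "lQ L - Suc i < lQ L \<and> lvels L ! (lQ L - Suc i) = map uminus (lvels L ! i)"
    using assms lvels_mirror by simp
next
  fix j assume j: "j < lQ L \<and> lvels L ! j = map uminus (lvels L ! i)"
  then have "lvels L ! j = lvels L ! (lQ L - Suc i)"
    using lvels_mirror[OF assms] by simp
  moreover have "lQ L - Suc i < lQ L"
    using assms by simp
  ultimately show "j = lQ L - Suc i"
    using j distinct_lvels[of L] nth_eq_iff_index_eq unfolding lQ_def by blast
qed

lemma opp_opp: "i < lQ L \<Longrightarrow> opp L (opp L i) = i"
  by (simp add: opp_eq)

lemma lvels_opp: "i < lQ L \<Longrightarrow> lvels L ! opp L i = map uminus (lvels L ! i)"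
  by (simp add: opp_eq lvels_mirror)

lemma sum_opp_reindex: "(\<Sum>i<lQ L. g (opp L i)) = (\<Sum>i<lQ L. g i)"
proof -
  have "(\<Sum>i<lQ L. g (opp L i)) = (\<Sum>i<lQ L. g (lQ L - Suc i))"
    by (rule sum.cong) (simp_all add: opp_eq)
  also have "\<dots> = (\<Sum>i<lQ L. g i)"
    by (rule sum.nat_diff_reindex)
  finally show ?thesis .
qed

lemma H2_eq:
  "H2 L c i \<alpha> \<beta> = c\<^sup>2 * (of_int (lvels L ! i ! \<alpha> * lvels L ! i ! \<beta>) - of_bool (\<alpha> = \<beta>) / 3)"
  unfolding H2_def vel_def cs2_def by (simp add: algebra_simps power2_eq_square)

lemma H2_commute: "H2 L c i \<alpha> \<beta> = H2 L c i \<beta> \<alpha>"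
  unfolding H2_def by (simp add: mult.commute)

lemma H2_opp:
  assumes "i < lQ L" "\<alpha> < ldim L" "\<beta> < ldim L"
  shows "H2 L c (opp L i) \<alpha> \<beta> = H2 L c i \<alpha> \<beta>"
  using assms by (simp add: H2_eq lvels_opp length_lvels_nth)

lemma wt_H2_fourth_moment:
  assumes "\<alpha> < ldim L" "\<beta> < ldim L" "\<gamma> < ldim L" "\<delta> < ldim L"
  shows "(\<Sum>i<lQ L. wt L i * H2 L c i \<alpha> \<beta> * H2 L c i \<gamma> \<delta>)
       = (cs2 c)\<^sup>2 * (of_bool (\<alpha> = \<gamma> \<and> \<beta> = \<delta>) + of_bool (\<alpha> = \<delta> \<and> \<beta> = \<gamma>))"
proof -
  have "(\<Sum>i<lQ L. wt L i * H2 L c i \<alpha> \<beta> * H2 L c i \<gamma> \<delta>)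
      = c ^ 4 * (\<Sum>v\<leftarrow>lvels L. wclass L (nnz v) * (of_int (v!\<alpha> * v!\<beta>) - of_bool (\<alpha> = \<beta>) / 3)
                                             * (of_int (v!\<gamma> * v!\<delta>) - of_bool (\<gamma> = \<delta>) / 3))"
    by (simp add: sum_lvels_nth[symmetric] sum_distrib_left wt_def H2_eq power4_eq_xxxx power2_eq_square mult_ac)
  also have "\<dots> = c ^ 4 * (of_bool (\<alpha> = \<gamma> \<and> \<beta> = \<delta>) + of_bool (\<alpha> = \<delta> \<and> \<beta> = \<gamma>)) / 9"
    using lattice_fourth_moment[of L] assms by simp
  finally show ?thesis
    by (simp add: cs2_def power4_eq_xxxx power2_eq_square)
qed

lemma sum_delta_of_bool:
  "(\<gamma>::nat) < n \<Longrightarrow> (\<Sum>\<alpha><n. of_bool (\<alpha> = \<gamma>) * X \<alpha>) = (X \<gamma> :: 'a::comm_semiring_1)"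
  by (simp add: Int_insert_right)

lemma sum_sum_delta_of_bool:
  "(\<gamma>::nat) < n \<Longrightarrow> \<delta> < n \<Longrightarrow>
    (\<Sum>\<alpha><n. \<Sum>\<beta><n. of_bool (\<alpha> = \<gamma> \<and> \<beta> = \<delta>) * X \<alpha> \<beta>) = (X \<gamma> \<delta> :: 'a::comm_semiring_1)"
  by (simp add: of_bool_conj mult.assoc sum_distrib_left[symmetric] sum_delta_of_bool
      del: sum_of_bool_mult_eq)

lemma winner_commute: "winner L p q = winner L q p"
  unfolding winner_def by (simp add: mult.commute)

lemma winner_cong: "(\<And>i. i < lQ L \<Longrightarrow> p i = q i) \<Longrightarrow> winner L p h = winner L q h"
  unfolding winner_def by (rule sum.cong) auto

lemma winner_add: "winner L (\<lambda>i. p i + q i) h = winner L p h + winner L q h"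
  unfolding winner_def by (simp add: sum.distrib ring_distribs add_divide_distrib)

lemma winner_wt_right: "winner L p (\<lambda>i. wt L i * h i) = (\<Sum>i<lQ L. p i * h i)"
  unfolding winner_def using wt_pos[of L] by (intro sum.cong) (auto simp: field_simps less_imp_neq[symmetric])

lemma fplus_in_symS: "fplus L f \<in> symS L"
  unfolding symS_def fplus_def by (auto simp: opp_opp)

lemma sum_fplus_even:
  assumes "\<forall>i<lQ L. h (opp L i) = h i"
  shows "(\<Sum>i<lQ L. fplus L f i * h i) = (\<Sum>i<lQ L. f i * h i)"
proof -
  have "(\<Sum>i<lQ L. fplus L f i * h i)
      = ((\<Sum>i<lQ L. f i * h i) + (\<Sum>i<lQ L. f (opp L i) * h (opp L i))) / 2"
    using assms by (simp add: fplus_def sum_divide_distrib[symmetric] sum.distrib[symmetric] algebra_simps)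
  also have "(\<Sum>i<lQ L. f (opp L i) * h (opp L i)) = (\<Sum>i<lQ L. f i * h i)"
    by (rule sum_opp_reindex)
  finally show ?thesis by simp
qed

lemma winner_fplus_wt:
  "\<forall>i<lQ L. h (opp L i) = h i \<Longrightarrow> winner L (fplus L f) (\<lambda>i. wt L i * h i) = (\<Sum>i<lQ L. h i * f i)"
  unfolding winner_wt_right using sum_fplus_even[of L h f] by (simp add: mult.commute)

lemma wt_in_S0: "wt L \<in> S0 L"
  unfolding S0_def by auto

lemma wt_ghost_in_SG: "l < NG \<Longrightarrow> (\<lambda>i. wt L i * \<phi> l i) \<in> SG L NG \<phi>"
  unfolding SG_def by (auto intro!: exI[of _ "\<lambda>k. of_bool (k = l)"] simp: sum_delta_of_bool)

lemma wt_H2_in_S2: "\<gamma> < ldim L \<Longrightarrow> \<delta> < ldim L \<Longrightarrow> (\<lambda>i. wt L i * H2 L c i \<gamma> \<delta>) \<in> S2 L c"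
  unfolding S2_def by (auto intro!: exI[of _ "\<lambda>\<alpha> \<beta>. of_bool (\<alpha> = \<gamma> \<and> \<beta> = \<delta>)"] simp: sum_sum_delta_of_bool simp del: sum_of_bool_mult_eq)

lemma decomposition_components:
  assumes "decomposition_hyp L c NG \<phi>" "h \<in> symS L"
  obtains g0 g2 gG where "g0 \<in> S0 L" "g2 \<in> S2 L c" "gG \<in> SG L NG \<phi>"
    and "\<forall>i<lQ L. h i = g0 i + g2 i + gG i"
    and "\<And>t. t \<in> S0 L \<Longrightarrow> winner L h t = winner L g0 t"
    and "\<And>t. t \<in> S2 L c \<Longrightarrow> winner L h t = winner L g2 t"
    and "\<And>t. t \<in> SG L NG \<phi> \<Longrightarrow> winner L h t = winner L gG t"
proof -
  have orth: "orth_sets L (S0 L) (S2 L c)" "orth_sets L (S0 L) (SG L NG \<phi>)"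
      "orth_sets L (S2 L c) (SG L NG \<phi>)"
    using assms(1) unfolding decomposition_hyp_def by blast+
  obtain g0 g2 gG where g: "g0 \<in> S0 L" "g2 \<in> S2 L c" "gG \<in> SG L NG \<phi>"
    and h: "\<forall>i<lQ L. h i = g0 i + g2 i + gG i"
    using assms unfolding decomposition_hyp_def by blast
  have split: "winner L h t = winner L g0 t + winner L g2 t + winner L gG t" for t
    using winner_cong[of L h "\<lambda>i. g0 i + g2 i + gG i" t] h by (simp add: winner_add)
  show thesis
  proof
    show "winner L h t = winner L g0 t" if "t \<in> S0 L" for t
      using split orth g that unfolding orth_sets_def by (metis add_0_right winner_commute)
    show "winner L h t = winner L g2 t" if "t \<in> S2 L c" for t
      using split orth g that unfolding orth_sets_def by (metis add_0_right add_0 winner_commute)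
    show "winner L h t = winner L gG t" if "t \<in> SG L NG \<phi>" for t
      using split orth g that unfolding orth_sets_def by (metis add_0 winner_commute)
  qed (use g h in auto)
qed

lemma S0_eq_0_if_winner_wt_eq_0:
  assumes "g \<in> S0 L" "winner L g (wt L) = 0" "i < lQ L"
  shows "g i = 0"
proof -
  obtain a where a: "\<forall>i<lQ L. g i = a * wt L i"
    using assms(1) unfolding S0_def by blast
  have "winner L g (wt L) = (\<Sum>i<lQ L. a * wt L i)"
    using winner_wt_right[of L g "\<lambda>_. 1"] a by simp
  also have "\<dots> = a"
    by (simp add: sum_distrib_left[symmetric] sum_wt)
  finally show ?thesis
    using a assms(2,3) by simp
qed

lemma winner_SG_ghost:
  assumes ghost_orth: "\<forall>k<NG. \<forall>l<NG. k \<noteq> l \<longrightarrow> (\<Sum>i<lQ L. wt L i * \<phi> k i * \<phi> l i) = 0"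
    and g: "\<forall>i<lQ L. g i = (\<Sum>k<NG. b k * (wt L i * \<phi> k i))"
    and l: "l < NG"
  shows "winner L g (\<lambda>i. wt L i * \<phi> l i) = b l * NGnorm L \<phi> l"
proof -
  have "winner L g (\<lambda>i. wt L i * \<phi> l i) = (\<Sum>i<lQ L. \<Sum>k<NG. b k * (wt L i * \<phi> k i * \<phi> l i))"
    unfolding winner_wt_right using g by (intro sum.cong) (auto simp: sum_distrib_right mult.assoc)
  also have "\<dots> = (\<Sum>k<NG. b k * (\<Sum>i<lQ L. wt L i * \<phi> k i * \<phi> l i))"
    by (subst sum.swap) (simp add: sum_distrib_left)
  also have "\<dots> = (\<Sum>k<NG. of_bool (k = l) * (b l * NGnorm L \<phi> l))"
    using ghost_orth l unfolding NGnorm_def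
    by (intro sum.cong) (auto simp: power2_eq_square mult_ac)
  also have "\<dots> = b l * NGnorm L \<phi> l"
    using l by (rule sum_delta_of_bool)
  finally show ?thesis .
qed

lemma ghost_eq_0_if_NGnorm_eq_0:
  assumes "NGnorm L \<phi> k = 0" "i < lQ L"
  shows "\<phi> k i = 0"
proof -
  have "\<forall>j\<in>{..<lQ L}. wt L j * (\<phi> k j)\<^sup>2 = 0"
    using assms(1) unfolding NGnorm_def
    by (subst sum_nonneg_eq_0_iff[symmetric]) (auto intro!: mult_nonneg_nonneg less_imp_le[OF wt_pos])
  then show ?thesis
    using assms(2) wt_pos[of L i] by force
qed

lemma SG_eq_PG:
  assumes ghost_orth: "\<forall>k<NG. \<forall>l<NG. k \<noteq> l \<longrightarrow> (\<Sum>i<lQ L. wt L i * \<phi> k i * \<phi> l i) = 0"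
    and "g \<in> SG L NG \<phi>"
    and moments: "\<forall>l<NG. winner L g (\<lambda>i. wt L i * \<phi> l i) = (\<Sum>j<lQ L. \<phi> l j * f j)"
    and i: "i < lQ L"
  shows "g i = PG L NG \<phi> f i"
proof -
  obtain b where b: "\<forall>i<lQ L. g i = (\<Sum>k<NG. b k * (wt L i * \<phi> k i))"
    using assms(2) unfolding SG_def by blast
  have "b k * (wt L i * \<phi> k i) = wt L i * \<phi> k i / NGnorm L \<phi> k * (\<Sum>j<lQ L. \<phi> k j * f j)"
    if k: "k < NG" for k
  proof (cases "NGnorm L \<phi> k = 0")
    case True
    \<comment> \<open>a ghost of norm zero vanishes on the lattice, so the junk division by zero in \<open>PG\<close> is harmless\<close>
    then show ?thesis
      using ghost_eq_0_if_NGnorm_eq_0 i by simp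
  next
    case False
    then show ?thesis
      using winner_SG_ghost[OF ghost_orth b k] moments k by (simp add: field_simps)
  qed
  then show ?thesis
    using b i unfolding PG_def by simp
qed

lemma winner_S2_H2:
  assumes g: "\<forall>i<lQ L. g i = (\<Sum>\<alpha><ldim L. \<Sum>\<beta><ldim L. A \<alpha> \<beta> * (wt L i * H2 L c i \<alpha> \<beta>))"
    and \<gamma>\<delta>: "\<gamma> < ldim L" "\<delta> < ldim L"
  shows "winner L g (\<lambda>i. wt L i * H2 L c i \<gamma> \<delta>) = (cs2 c)\<^sup>2 * (A \<gamma> \<delta> + A \<delta> \<gamma>)"
proof -
  let ?D = "ldim L"
  have "winner L g (\<lambda>i. wt L i * H2 L c i \<gamma> \<delta>)
      = (\<Sum>i<lQ L. \<Sum>\<alpha><?D. \<Sum>\<beta><?D. A \<alpha> \<beta> * (wt L i * H2 L c i \<alpha> \<beta> * H2 L c i \<gamma> \<delta>))"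
    unfolding winner_wt_right using g by (intro sum.cong) (auto simp: sum_distrib_right mult.assoc)
  also have "\<dots> = (\<Sum>\<alpha><?D. \<Sum>\<beta><?D. A \<alpha> \<beta> * (\<Sum>i<lQ L. wt L i * H2 L c i \<alpha> \<beta> * H2 L c i \<gamma> \<delta>))"
    by (subst sum.swap, rule sum.cong, simp, subst sum.swap) (simp add: sum_distrib_left)
  also have "\<dots> = (\<Sum>\<alpha><?D. \<Sum>\<beta><?D. A \<alpha> \<beta> *
      ((cs2 c)\<^sup>2 * (of_bool (\<alpha> = \<gamma> \<and> \<beta> = \<delta>) + of_bool (\<alpha> = \<delta> \<and> \<beta> = \<gamma>))))"
    using \<gamma>\<delta> by (intro sum.cong refl) (simp add: wt_H2_fourth_moment)
  also have "\<dots> = (cs2 c)\<^sup>2 * (\<Sum>\<alpha><?D. \<Sum>\<beta><?D. of_bool (\<alpha> = \<gamma> \<and> \<beta> = \<delta>) * A \<alpha> \<beta>)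
      + (cs2 c)\<^sup>2 * (\<Sum>\<alpha><?D. \<Sum>\<beta><?D. of_bool (\<alpha> = \<delta> \<and> \<beta> = \<gamma>) * A \<alpha> \<beta>)"
    by (simp add: sum.distrib sum_distrib_left algebra_simps del: sum_of_bool_mult_eq sum_mult_of_bool_eq)
  also have "\<dots> = (cs2 c)\<^sup>2 * (A \<gamma> \<delta> + A \<delta> \<gamma>)"
    using \<gamma>\<delta> by (simp add: sum_sum_delta_of_bool distrib_left del: sum_of_bool_mult_eq)
  finally show ?thesis .
qed

lemma sum_H2_symmetrize:
  "(\<Sum>\<alpha><ldim L. \<Sum>\<beta><ldim L. H2 L c i \<alpha> \<beta> * A \<alpha> \<beta>)
    = (\<Sum>\<alpha><ldim L. \<Sum>\<beta><ldim L. H2 L c i \<alpha> \<beta> * (A \<alpha> \<beta> + A \<beta> \<alpha>) / 2)"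
proof -
  have "(\<Sum>\<alpha><ldim L. \<Sum>\<beta><ldim L. H2 L c i \<alpha> \<beta> * A \<beta> \<alpha>)
      = (\<Sum>\<alpha><ldim L. \<Sum>\<beta><ldim L. H2 L c i \<alpha> \<beta> * A \<alpha> \<beta>)"
    by (subst sum.swap) (simp add: H2_commute)
  then show ?thesis
    by (simp add: distrib_left add_divide_distrib sum.distrib sum_divide_distrib[symmetric])
qed

lemma S2_eq_Aneq_expansion:
  assumes "c \<noteq> 0" "g \<in> S2 L c"
    and moments: "\<forall>\<gamma><ldim L. \<forall>\<delta><ldim L. winner L g (\<lambda>i. wt L i * H2 L c i \<gamma> \<delta>) = Aneq L c f \<gamma> \<delta>"
    and i: "i < lQ L"
  shows "g i = wt L i * (\<Sum>\<alpha><ldim L. \<Sum>\<beta><ldim L. H2 L c i \<alpha> \<beta> / (2 * (cs2 c)\<^sup>2) * Aneq L c f \<alpha> \<beta>)"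
proof -
  obtain A where A: "\<forall>i<lQ L. g i = (\<Sum>\<alpha><ldim L. \<Sum>\<beta><ldim L. A \<alpha> \<beta> * (wt L i * H2 L c i \<alpha> \<beta>))"
    using assms(2) unfolding S2_def by blast
  have "cs2 c \<noteq> 0"
    using assms(1) by (simp add: cs2_def)
  then have "H2 L c i \<alpha> \<beta> / (2 * (cs2 c)\<^sup>2) * Aneq L c f \<alpha> \<beta> = H2 L c i \<alpha> \<beta> * (A \<alpha> \<beta> + A \<beta> \<alpha>) / 2"
    if "\<alpha> < ldim L" "\<beta> < ldim L" for \<alpha> \<beta>
    using winner_S2_H2[OF A that] moments that by (simp add: field_simps)
  then have "(\<Sum>\<alpha><ldim L. \<Sum>\<beta><ldim L. H2 L c i \<alpha> \<beta> / (2 * (cs2 c)\<^sup>2) * Aneq L c f \<alpha> \<beta>)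
      = (\<Sum>\<alpha><ldim L. \<Sum>\<beta><ldim L. H2 L c i \<alpha> \<beta> * (A \<alpha> \<beta> + A \<beta> \<alpha>) / 2)"
    by (intro sum.cong refl) simp
  also have "\<dots> = (\<Sum>\<alpha><ldim L. \<Sum>\<beta><ldim L. H2 L c i \<alpha> \<beta> * A \<alpha> \<beta>)"
    by (rule sum_H2_symmetrize[symmetric])
  finally show ?thesis
    using A i by (simp add: sum_distrib_left mult_ac)
qed

theorem theorem1:
  fixes L :: lattice and c :: real and NG :: nat
    and \<phi> :: "nat \<Rightarrow> nat \<Rightarrow> real" and f :: "nat \<Rightarrow> real"
  assumes c_pos: "c > 0"
    and ghost_even: "\<forall>k<NG. \<forall>i<lQ L. \<phi> k (opp L i) = \<phi> k i"
    and ghost_orth: "\<forall>k<NG. \<forall>l<NG. k \<noteq> l \<longrightarrow> (\<Sum>i<lQ L. wt L i * \<phi> k i * \<phi> l i) = 0"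
    and decomp: "decomposition_hyp L c NG \<phi>"
    and mass: "(\<Sum>i<lQ L. f i) = 0"
  shows "\<forall>i<lQ L.
    wt L i * (\<Sum>\<alpha><ldim L. \<Sum>\<beta><ldim L. H2 L c i \<alpha> \<beta> / (2 * (cs2 c)^2) * Aneq L c f \<alpha> \<beta>)
      = fplus L f i - PG L NG \<phi> f i"
proof -
  obtain g0 g2 gG where g: "g0 \<in> S0 L" "g2 \<in> S2 L c" "gG \<in> SG L NG \<phi>"
    and split: "\<forall>i<lQ L. fplus L f i = g0 i + g2 i + gG i"
    and proj0: "\<And>t. t \<in> S0 L \<Longrightarrow> winner L (fplus L f) t = winner L g0 t"
    and proj2: "\<And>t. t \<in> S2 L c \<Longrightarrow> winner L (fplus L f) t = winner L g2 t"
    and projG: "\<And>t. t \<in> SG L NG \<phi> \<Longrightarrow> winner L (fplus L f) t = winner L gG t"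
    using decomposition_components[OF decomp fplus_in_symS] by blast
  have "winner L g0 (wt L) = 0"
    using proj0[OF wt_in_S0] winner_fplus_wt[of L "\<lambda>_. 1" f] mass by simp
  then have "g0 i = 0" if "i < lQ L" for i
    using S0_eq_0_if_winner_wt_eq_0 g(1) that by blast
  moreover have "gG i = PG L NG \<phi> f i" if "i < lQ L" for i
  proof (rule SG_eq_PG[OF ghost_orth g(3) _ that], intro allI impI)
    fix l assume "l < NG"
    then show "winner L gG (\<lambda>i. wt L i * \<phi> l i) = (\<Sum>j<lQ L. \<phi> l j * f j)"
      using projG[OF wt_ghost_in_SG] winner_fplus_wt[of L "\<phi> l" f] ghost_even by simp
  qed
  moreover have "g2 i = wt L i * (\<Sum>\<alpha><ldim L. \<Sum>\<beta><ldim L.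
      H2 L c i \<alpha> \<beta> / (2 * (cs2 c)^2) * Aneq L c f \<alpha> \<beta>)" if "i < lQ L" for i
  proof (rule S2_eq_Aneq_expansion[OF _ g(2) _ that], use c_pos in simp, intro allI impI)
    fix \<gamma> \<delta> assume "\<gamma> < ldim L" "\<delta> < ldim L"
    then show "winner L g2 (\<lambda>i. wt L i * H2 L c i \<gamma> \<delta>) = Aneq L c f \<gamma> \<delta>"
      using proj2[OF wt_H2_in_S2] winner_fplus_wt[of L "\<lambda>i. H2 L c i \<gamma> \<delta>" f] H2_opp
      by (simp add: Aneq_def)
  qed
  ultimately show ?thesis
    using split by simp
qed

end
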